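(* Let $f:A\to B$ be a homomorphism of commutative rings such that every ideal of $B$ is of the form $f(\mathfrak{a})B$ for some ideal $\mathfrak{a}\subseteq A$, and let $\sigma$ be a hereditary torsion theory on $A$-modules such that $A$ is totally $\sigma$-artinian. Then $B$ is totally $f(\sigma)$-artinian.
   Context: $\mathcal{L}(\sigma)$ is the Gabriel filter of $\sigma$. $f(\sigma)$ is the hereditary torsion theory on $B$-modules with Gabriel filter $\mathcal{L}(f(\sigma))=\{\mathfrak{b}\subseteq B: f^{-1}(\mathfrak{b})\in\mathcal{L}(\sigma)\}$ (a $B$-module is $f(\sigma)$-torsion iff it is $\sigma$-torsion as an $A$-module). A ring $R$ with hereditary torsion theory $\tau$ is totally $\tau$-artinian if for every descending chain of ideals $\mathfrak{a}_1\supseteq\mathfrak{a}_2\supseteq\cdots$ there exist $m$ and $\mathfrak{h}\in\mathcal{L}(\tau)$ with $\mathfrak{a}_m\mathfrak{h}\subseteq\mathfrak{a}_s$ for all $s\ge m$. *)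

theory Defs
  imports Main
begin

definition is_ideal :: "'a::comm_ring_1 set \<Rightarrow> bool" where
  "is_ideal I \<longleftrightarrow> 0 \<in> I \<and> (\<forall>x\<in>I. \<forall>y\<in>I. x + y \<in> I) \<and> (\<forall>r. \<forall>x\<in>I. r * x \<in> I)"

definition gen_ideal :: "'a::comm_ring_1 set \<Rightarrow> 'a set" where
  "gen_ideal S = \<Inter>{K. is_ideal K \<and> S \<subseteq> K}"

definition ideal_prod :: "'a::comm_ring_1 set \<Rightarrow> 'a set \<Rightarrow> 'a set" where
  "ideal_prod I J = gen_ideal {x * y | x y. x \<in> I \<and> y \<in> J}"

definition colon :: "'a::comm_ring_1 set \<Rightarrow> 'a \<Rightarrow> 'a set" where
  "colon I r = {x. x * r \<in> I}"

definition ring_hom_cr :: "('a::comm_ring_1 \<Rightarrow> 'b::comm_ring_1) \<Rightarrow> bool" where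
  "ring_hom_cr f \<longleftrightarrow> f 1 = 1 \<and> (\<forall>x y. f (x + y) = f x + f y) \<and> (\<forall>x y. f (x * y) = f x * f y)"

definition ext_ideal :: "('a::comm_ring_1 \<Rightarrow> 'b::comm_ring_1) \<Rightarrow> 'a set \<Rightarrow> 'b set" where
  "ext_ideal f I = gen_ideal (f ` I)"

text \<open>Gabriel filter (Gabriel topology) of a hereditary torsion theory, axioms T1--T4 (Stenstroem).\<close>
definition gabriel_filter :: "'a::comm_ring_1 set set \<Rightarrow> bool" where
  "gabriel_filter L \<longleftrightarrow>
     (\<forall>I\<in>L. is_ideal I) \<and> UNIV \<in> L \<and>
     (\<forall>I\<in>L. \<forall>J. is_ideal J \<and> I \<subseteq> J \<longrightarrow> J \<in> L) \<and>
     (\<forall>I\<in>L. \<forall>J\<in>L. I \<inter> J \<in> L) \<and>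
     (\<forall>I\<in>L. \<forall>r. colon I r \<in> L) \<and>
     (\<forall>J. is_ideal J \<and> (\<exists>I\<in>L. \<forall>r\<in>I. colon J r \<in> L) \<longrightarrow> J \<in> L)"

text \<open>Gabriel filter of f(sigma): ideals b of B with f^-1(b) in L(sigma).\<close>
definition push_filter :: "('a::comm_ring_1 \<Rightarrow> 'b::comm_ring_1) \<Rightarrow> 'a set set \<Rightarrow> 'b set set" where
  "push_filter f L = {J. is_ideal J \<and> f -` J \<in> L}"

text \<open>Totally tau-artinian, tau given by its Gabriel filter L.\<close>
definition totally_artinian :: "'a::comm_ring_1 set set \<Rightarrow> bool" where
  "totally_artinian L \<longleftrightarrow>
     (\<forall>a :: nat \<Rightarrow> 'a set. (\<forall>n. is_ideal (a n)) \<and> (\<forall>n. a (Suc n) \<subseteq> a n) \<longrightarrow>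
        (\<exists>m. \<exists>h\<in>L. \<forall>s\<ge>m. ideal_prod (a m) h \<subseteq> a s))"

end

theory Submission
  imports Defs
begin

text \<open>Contract a descending chain of ideals of B to A. Since every ideal of B is extended,
  each member is the extension of its contraction, and extension carries products into products;
  so the witness (m, h) for the contracted chain yields the witness (m, f(h)B) for the original
  one, and f(h)B lies in the filter of f(\<sigma>) because its contraction contains h.\<close>

lemma is_ideal_gen_ideal: "is_ideal (gen_ideal S)"
  unfolding gen_ideal_def is_ideal_def by auto

lemma gen_ideal_subset: "S \<subseteq> gen_ideal S"
  unfolding gen_ideal_def by auto

lemma gen_ideal_minimal: "is_ideal K \<Longrightarrow> S \<subseteq> K \<Longrightarrow> gen_ideal S \<subseteq> K"
  unfolding gen_ideal_def by auto

lemma gen_ideal_mono: "S \<subseteq> T \<Longrightarrow> gen_ideal S \<subseteq> gen_ideal T"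
  by (meson gen_ideal_minimal gen_ideal_subset is_ideal_gen_ideal order_trans)

lemma is_ideal_mult_left_vimage: "is_ideal K \<Longrightarrow> is_ideal {x. x * y \<in> K}"
  unfolding is_ideal_def by (auto simp: distrib_right mult.assoc)

lemma is_ideal_mult_right_vimage: "is_ideal K \<Longrightarrow> is_ideal {y. x * y \<in> K}"
  unfolding is_ideal_def by (auto simp: distrib_left mult.left_commute)

lemma gen_ideal_mult_mem:
  assumes K: "is_ideal K" and ST: "\<And>s t. s \<in> S \<Longrightarrow> t \<in> T \<Longrightarrow> s * t \<in> K"
    and x: "x \<in> gen_ideal S" and y: "y \<in> gen_ideal T"
  shows "x * y \<in> K"
proof -
  have "x * t \<in> K" if t: "t \<in> T" for t
  proof -
    have "S \<subseteq> {x. x * t \<in> K}" using ST t by auto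
    then show ?thesis using gen_ideal_minimal[OF is_ideal_mult_left_vimage[OF K]] x by blast
  qed
  then have "T \<subseteq> {y. x * y \<in> K}" by auto
  then show ?thesis using gen_ideal_minimal[OF is_ideal_mult_right_vimage[OF K]] y by blast
qed

lemma ideal_prod_mem: "x \<in> I \<Longrightarrow> y \<in> J \<Longrightarrow> x * y \<in> ideal_prod I J"
  unfolding ideal_prod_def by (rule subsetD[OF gen_ideal_subset]) blast

lemma ideal_prod_gen_ideal_subset:
  assumes "is_ideal K" and "\<And>s t. s \<in> S \<Longrightarrow> t \<in> T \<Longrightarrow> s * t \<in> K"
  shows "ideal_prod (gen_ideal S) (gen_ideal T) \<subseteq> K"
  unfolding ideal_prod_def
  using gen_ideal_mult_mem[OF assms] by (intro gen_ideal_minimal[OF assms(1)]) blast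

lemma ring_hom_cr_zero: "ring_hom_cr f \<Longrightarrow> f 0 = 0"
  unfolding ring_hom_cr_def by (metis add_0 add_cancel_right_right)

lemma is_ideal_vimage: "ring_hom_cr f \<Longrightarrow> is_ideal J \<Longrightarrow> is_ideal (f -` J)"
  unfolding is_ideal_def using ring_hom_cr_zero[of f] unfolding ring_hom_cr_def by auto

lemma subset_vimage_ext_ideal: "I \<subseteq> f -` ext_ideal f I"
  unfolding ext_ideal_def using gen_ideal_subset[of "f ` I"] by auto

lemma ext_ideal_mono: "I \<subseteq> I' \<Longrightarrow> ext_ideal f I \<subseteq> ext_ideal f I'"
  unfolding ext_ideal_def by (intro gen_ideal_mono image_mono)

lemma ext_ideal_vimage_ext_ideal: "ext_ideal f (f -` ext_ideal f I) = ext_ideal f I"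
proof
  show "ext_ideal f (f -` ext_ideal f I) \<subseteq> ext_ideal f I"
    unfolding ext_ideal_def by (intro gen_ideal_minimal[OF is_ideal_gen_ideal]) auto
  show "ext_ideal f I \<subseteq> ext_ideal f (f -` ext_ideal f I)"
    by (intro ext_ideal_mono subset_vimage_ext_ideal)
qed

lemma ideal_prod_ext_ideal_subset:
  assumes "ring_hom_cr f"
  shows "ideal_prod (ext_ideal f I) (ext_ideal f J) \<subseteq> ext_ideal f (ideal_prod I J)"
  unfolding ext_ideal_def
proof (rule ideal_prod_gen_ideal_subset[OF is_ideal_gen_ideal])
  fix s t assume "s \<in> f ` I" "t \<in> f ` J"
  then obtain x y where "x \<in> I" "y \<in> J" "s = f x" "t = f y" by blast
  then have "s * t \<in> f ` ideal_prod I J"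
    using assms ideal_prod_mem unfolding ring_hom_cr_def by (metis image_eqI)
  then show "s * t \<in> gen_ideal (f ` ideal_prod I J)"
    by (rule subsetD[OF gen_ideal_subset])
qed

lemma ext_ideal_mem_push_filter:
  assumes hom: "ring_hom_cr f" and L: "gabriel_filter L" and h: "h \<in> L"
  shows "ext_ideal f h \<in> push_filter f L"
proof -
  have ext: "is_ideal (ext_ideal f h)" unfolding ext_ideal_def by (rule is_ideal_gen_ideal)
  have "\<forall>I\<in>L. \<forall>J. is_ideal J \<and> I \<subseteq> J \<longrightarrow> J \<in> L"
    using L unfolding gabriel_filter_def by blast
  then have "f -` ext_ideal f h \<in> L"
    using h is_ideal_vimage[OF hom ext] subset_vimage_ext_ideal[of h f] by blast
  with ext show ?thesis unfolding push_filter_def by simp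
qed

theorem mainTheorem9:
  fixes f :: "'a::comm_ring_1 \<Rightarrow> 'b::comm_ring_1"
    and L :: "'a set set"
  assumes "ring_hom_cr f"
    and "\<forall>J :: 'b set. is_ideal J \<longrightarrow> (\<exists>I. is_ideal I \<and> J = ext_ideal f I)"
    and "gabriel_filter L"
    and "totally_artinian L"
  shows "totally_artinian (push_filter f L)"
  unfolding totally_artinian_def
proof (intro allI impI)
  fix b :: "nat \<Rightarrow> 'b set"
  assume b: "(\<forall>n. is_ideal (b n)) \<and> (\<forall>n. b (Suc n) \<subseteq> b n)"
  define a where "a n = f -` b n" for n
  have "(\<forall>n. is_ideal (a n)) \<and> (\<forall>n. a (Suc n) \<subseteq> a n)"
    using b is_ideal_vimage[OF assms(1)] unfolding a_def by blast
  then obtain m h where "h \<in> L" and mh: "\<forall>s\<ge>m. ideal_prod (a m) h \<subseteq> a s"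
    using assms(4)[unfolded totally_artinian_def, rule_format] by blast
  have b_ext: "b n = ext_ideal f (a n)" for n
  proof -
    obtain I where "b n = ext_ideal f I" using assms(2) b by blast
    then show ?thesis unfolding a_def by (simp add: ext_ideal_vimage_ext_ideal)
  qed
  have "ideal_prod (b m) (ext_ideal f h) \<subseteq> b s" if "s \<ge> m" for s
  proof -
    have "ideal_prod (b m) (ext_ideal f h) \<subseteq> ext_ideal f (ideal_prod (a m) h)"
      unfolding b_ext by (rule ideal_prod_ext_ideal_subset[OF assms(1)])
    also have "\<dots> \<subseteq> ext_ideal f (a s)" using mh that by (intro ext_ideal_mono) blast
    finally show ?thesis unfolding b_ext .
  qed
  then show "\<exists>m. \<exists>h\<in>push_filter f L. \<forall>s\<ge>m. ideal_prod (b m) h \<subseteq> b s"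
    using ext_ideal_mem_push_filter[OF assms(1,3) \<open>h \<in> L\<close>] by blast
qed

end
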